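(* Let $E$ be a finite dimensional real vector space and $g(t,s,z)$ a smooth function from a neighborhood of $(0,0,z_0)$ in $\mathbb{R}^2\times E$ to a normed space $F$. Define $$f(t,z)=\begin{cases} g(t,t\log|t|,z)&\text{if } t\neq0,\\ g(0,0,z)&\text{if } t=0.\end{cases}$$ Assume that $g(0,s,z)$ only depends on $z$. Then $f$ is of class $C^1$ and $$df(0,z)=\frac{\partial g}{\partial t}(0,0,z)\,dt+d_zg(0,0,z).$$ *)

theory Defs
  imports "HOL-Analysis.Analysis"
begin

fun iter_deriv :: "('a::real_normed_vector \<Rightarrow> 'b::real_normed_vector) \<Rightarrow> 'a list \<Rightarrow> 'a \<Rightarrow> 'b" where
  "iter_deriv f [] = f"
| "iter_deriv f (v # vs) = (\<lambda>x. frechet_derivative (iter_deriv f vs) (at x) v)"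

definition smooth_on :: "'a::euclidean_space set \<Rightarrow> ('a \<Rightarrow> 'b::real_normed_vector) \<Rightarrow> bool" where
  "smooth_on U f \<longleftrightarrow> open U \<and> (\<forall>vs. iter_deriv f vs differentiable_on U)"

definition C1_on :: "'a::real_normed_vector set \<Rightarrow> ('a \<Rightarrow> 'b::real_normed_vector) \<Rightarrow> bool" where
  "C1_on V f \<longleftrightarrow> (\<exists>f'. (\<forall>x\<in>V. (f has_derivative blinfun_apply (f' x)) (at x)) \<and> continuous_on V f')"

definition tlog_comp :: "(real \<times> real \<times> 'e \<Rightarrow> 'f) \<Rightarrow> real \<times> 'e \<Rightarrow> 'f" where
  "tlog_comp g = (\<lambda>(t, z). if t = 0 then g (0, 0, z) else g (t, t * ln \<bar>t\<bar>, z))"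

end

theory Submission
  imports Defs "HOL-Real_Asymp.Real_Asymp"
begin

text \<open>Write f = g \<circ> \<gamma> with \<gamma>(t,z) = (t, t log|t|, z); off the axis t = 0 this is the chain
  rule. Since g(0,s,z) does not depend on s, \<open>\<partial>g/\<partial>s\<close> vanishes on t = 0, so the mean value
  theorem gives \<open>|\<partial>g/\<partial>s(t,s,z)| \<le> B|t|\<close> and \<open>|g(t,s,z) - g(t,0,z)| \<le> B|t||s|\<close> near (0,0,z0).
  Hence f(t,z) - g(t,0,z) = O(t^2 log|t|) = o(|t|), which gives the derivative on the axis; and the
  only singular term of the chain rule formula, \<open>(log|t| + 1) \<partial>g/\<partial>s(\<gamma>(t,z)) dt\<close>, is
  O(|t| log|t|), which gives continuity of the derivative.\<close>

section \<open>The function \<open>t log |t|\<close>\<close>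

lemma isCont_mult_ln_abs: "isCont (\<lambda>t::real. t * ln \<bar>t\<bar>) t"
proof (cases "t = 0")
  case True
  have "((\<lambda>t::real. t * ln \<bar>t\<bar>) \<longlongrightarrow> 0) (at 0)"
    by (rule filterlim_split_at; real_asymp)
  with True show ?thesis
    by (simp add: isCont_def)
qed (auto intro!: continuous_intros)

lemma has_real_derivative_mult_ln_abs:
  assumes "t \<noteq> 0"
  shows "((\<lambda>t::real. t * ln \<bar>t\<bar>) has_real_derivative ln \<bar>t\<bar> + 1) (at t)"
proof (rule has_field_derivative_transform_within_open)
  show "((\<lambda>s. s * ln (sgn t * s)) has_real_derivative ln \<bar>t\<bar> + 1) (at t)"
    using assms by (auto intro!: derivative_eq_intros simp: abs_sgn sgn_if)
  show "open {s::real. 0 < s * t}"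
    by (intro open_Collect_less continuous_intros)
qed (use assms in \<open>auto simp: zero_less_mult_iff sgn_if\<close>)

lemma isCont_ln_abs_scaleR:
  fixes \<phi> :: "'a::t2_space \<Rightarrow> real" and h :: "'a \<Rightarrow> 'b::real_normed_vector"
  assumes "isCont \<phi> x" "isCont h x" and bound: "\<forall>\<^sub>F y in nhds x. norm (h y) \<le> B * \<bar>\<phi> y\<bar>"
  shows "isCont (\<lambda>y. (ln \<bar>\<phi> y\<bar> + 1) *\<^sub>R h y) x"
proof (cases "\<phi> x = 0")
  case False
  with assms(1,2) show ?thesis
    by (intro continuous_intros) auto
next
  case True
  have "h x = 0"
    using eventually_nhds_x_imp_x[OF bound] True by simp
  have "((\<lambda>y. \<bar>B\<bar> * \<bar>\<phi> y * ln \<bar>\<phi> y\<bar> + \<phi> y\<bar>) \<longlongrightarrow> \<bar>B\<bar> * \<bar>\<phi> x * ln \<bar>\<phi> x\<bar> + \<phi> x\<bar>) (at x)"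
    by (intro tendsto_intros isCont_tendsto_compose[OF isCont_mult_ln_abs]
        continuous_within_tendsto_compose[OF assms(1)]) auto
  then have "((\<lambda>y. \<bar>B\<bar> * \<bar>\<phi> y * ln \<bar>\<phi> y\<bar> + \<phi> y\<bar>) \<longlongrightarrow> 0) (at x)"
    using True by simp
  then have "((\<lambda>y. (ln \<bar>\<phi> y\<bar> + 1) *\<^sub>R h y) \<longlongrightarrow> 0) (at x)"
  proof (rule Lim_null_comparison[rotated])
    have "\<forall>\<^sub>F y in at x. norm (h y) \<le> B * \<bar>\<phi> y\<bar>"
      using bound eventually_nhds_conv_at[of _ x] by simp
    then show "\<forall>\<^sub>F y in at x. norm ((ln \<bar>\<phi> y\<bar> + 1) *\<^sub>R h y) \<le> \<bar>B\<bar> * \<bar>\<phi> y * ln \<bar>\<phi> y\<bar> + \<phi> y\<bar>"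
    proof eventually_elim
      case (elim y)
      have "norm ((ln \<bar>\<phi> y\<bar> + 1) *\<^sub>R h y) = \<bar>ln \<bar>\<phi> y\<bar> + 1\<bar> * norm (h y)"
        by simp
      also have "\<dots> \<le> \<bar>ln \<bar>\<phi> y\<bar> + 1\<bar> * (\<bar>B\<bar> * \<bar>\<phi> y\<bar>)"
        using order_trans[OF elim mult_right_mono[OF abs_ge_self]] by (simp add: mult_left_mono)
      also have "\<dots> = \<bar>B\<bar> * \<bar>\<phi> y * ln \<bar>\<phi> y\<bar> + \<phi> y\<bar>"
        by (simp add: abs_mult[symmetric] algebra_simps)
      finally show ?case .
    qed
  qed
  with \<open>h x = 0\<close> show ?thesis
    by (simp add: isCont_def)
qed

section \<open>Derivatives, lines and the mean value theorem\<close>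

lemma linear_triple_expand:
  assumes "linear G"
  shows "G (a, b, c) = a *\<^sub>R G (1, 0, 0) + b *\<^sub>R G (0, 1, 0) + G (0, 0, c)"
proof -
  have "G (a, b, c) = G (a *\<^sub>R (1, 0, 0) + b *\<^sub>R (0, 1, 0) + (0, 0, c))"
    by simp
  then show ?thesis
    by (simp only: linear_add[OF assms] linear_cmul[OF assms])
qed

lemma dist_Pair_shrink_fst:
  fixes t t' :: real
  assumes "\<bar>t'\<bar> \<le> \<bar>t\<bar>"
  shows "dist (0, w0) (t', w) \<le> dist (0, w0) (t, w)"
  using assms by (simp add: dist_Pair_Pair abs_le_square_iff)

lemma has_derivative_along_line:
  assumes "(f has_derivative D) (at (x + u *\<^sub>R v))"
  shows "((\<lambda>u. f (x + u *\<^sub>R v)) has_derivative (\<lambda>h. h *\<^sub>R D v)) (at u)"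
proof -
  have "((\<lambda>u. x + u *\<^sub>R v) has_derivative (\<lambda>h. h *\<^sub>R v)) (at u)"
    by (auto intro!: derivative_eq_intros)
  from diff_chain_at[OF this assms] show ?thesis
    by (simp add: o_def linear_cmul[OF has_derivative_linear[OF assms]])
qed

lemma norm_diff_le_along_segment:
  assumes deriv: "\<And>u. u \<in> {0..1} \<Longrightarrow> (f has_derivative D u) (at (x + u *\<^sub>R v))"
    and bound: "\<And>u. u \<in> {0..1} \<Longrightarrow> norm (D u v) \<le> B"
  shows "norm (f (x + v) - f x) \<le> B"
proof -
  have "norm (f (x + 1 *\<^sub>R v) - f (x + 0 *\<^sub>R v)) \<le> B * norm (1 - 0 :: real)"
  proof (rule differentiable_bound[where f' = "\<lambda>u h. h *\<^sub>R D u v"])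
    show "((\<lambda>u. f (x + u *\<^sub>R v)) has_derivative (\<lambda>h. h *\<^sub>R D u v)) (at u within {0..1})"
      if "u \<in> {0..1}" for u
      using has_derivative_along_line[OF deriv[OF that]] by (rule has_derivative_at_withinI)
    show "onorm (\<lambda>h::real. h *\<^sub>R D u v) \<le> B" if "u \<in> {0..1}" for u
      using bound[OF that] by (simp add: onorm_scaleR_left onorm_id)
  qed auto
  then show ?thesis
    by simp
qed

lemma has_derivative_eq_0_if_constant_along_line:
  assumes "(f has_derivative D) (at x)" and "\<forall>\<^sub>F u in nhds 0. f (x + u *\<^sub>R v) = f x"
  shows "D v = 0"
proof -
  have "((\<lambda>u. f (x + u *\<^sub>R v)) has_derivative (\<lambda>h. h *\<^sub>R D v)) (at 0)"
    using has_derivative_along_line[of f D x 0 v] assms(1) by simp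
  moreover have "((\<lambda>u. f (x + u *\<^sub>R v)) has_derivative (\<lambda>h. 0)) (at 0)"
  proof (rule has_derivative_transform_eventually[OF has_derivative_const])
    show "\<forall>\<^sub>F u in at 0. f x = f (x + u *\<^sub>R v)"
      using assms(2) by (auto simp: eventually_nhds_conv_at elim: eventually_mono)
  qed simp_all
  ultimately have "(\<lambda>h::real. h *\<^sub>R D v) = (\<lambda>h. 0)"
    by (rule has_derivative_unique)
  then show ?thesis
    by (metis scaleR_one)
qed

lemma has_derivative_zero_if_norm_le:
  fixes f :: "'a::real_normed_vector \<Rightarrow> 'b::real_normed_vector"
  assumes "\<forall>\<^sub>F y in nhds x. norm (f y) \<le> \<epsilon> y * norm (y - x)" and "(\<epsilon> \<longlongrightarrow> 0) (at x)"
  shows "(f has_derivative (\<lambda>_. 0)) (at x)"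
  unfolding has_derivative_iff_norm
proof (intro conjI bounded_linear_zero)
  have "f x = 0"
    using assms(1) by (simp add: eventually_nhds_conv_at)
  show "((\<lambda>y. norm (f y - f x - 0) / norm (y - x)) \<longlongrightarrow> 0) (at x)"
  proof (rule Lim_null_comparison)
    have "\<forall>\<^sub>F y in at x. norm (f y) \<le> \<epsilon> y * norm (y - x)"
      using assms(1) by (simp add: eventually_nhds_conv_at)
    moreover have "\<forall>\<^sub>F y in at x. y \<noteq> x"
      by (simp add: eventually_at_filter)
    ultimately show "\<forall>\<^sub>F y in at x. norm (norm (f y - f x - 0) / norm (y - x)) \<le> \<epsilon> y"
      by eventually_elim (simp add: \<open>f x = 0\<close> divide_le_eq)
  qed (fact assms(2))
qed

lemma C1_onI:
  fixes f :: "'a::euclidean_space \<Rightarrow> 'b::real_normed_vector"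
  assumes "\<And>x. x \<in> V \<Longrightarrow> (f has_derivative D x) (at x)"
    and "\<And>v. continuous_on V (\<lambda>x. D x v)"
  shows "C1_on V f"
  unfolding C1_on_def
proof (intro exI[of _ "\<lambda>x. Blinfun (D x)"] conjI ballI)
  have D: "blinfun_apply (Blinfun (D x)) = D x" if "x \<in> V" for x
    using assms(1)[OF that] by (simp add: bounded_linear_Blinfun_apply has_derivative_bounded_linear)
  show "(f has_derivative blinfun_apply (Blinfun (D x))) (at x)" if "x \<in> V" for x
    using assms(1)[OF that] by (simp add: D[OF that])
  show "continuous_on V (\<lambda>x. Blinfun (D x))"
    by (rule continuous_on_blinfun_componentwise) (simp add: D assms(2) cong: continuous_on_cong)
qed

lemma iter_deriv_iter_deriv: "iter_deriv (iter_deriv f ws) vs = iter_deriv f (vs @ ws)"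
  by (induction vs) auto

lemma smooth_on_iter_deriv: "smooth_on U f \<Longrightarrow> smooth_on U (iter_deriv f vs)"
  by (simp add: smooth_on_def iter_deriv_iter_deriv)

lemma smooth_on_has_derivative:
  assumes "smooth_on U f" "x \<in> U"
  shows "(f has_derivative frechet_derivative f (at x)) (at x)"
proof -
  have "f differentiable_on U" "open U"
    using assms(1) unfolding smooth_on_def by (metis iter_deriv.simps(1))+
  then show ?thesis
    using assms(2) by (simp add: differentiable_on_eq_differentiable_at frechet_derivative_works)
qed

lemma smooth_on_imp_continuous_on: "smooth_on U f \<Longrightarrow> continuous_on U f"
  by (metis differentiable_imp_continuous_on iter_deriv.simps(1) smooth_on_def)

lemma norm_le_mult_abs_fst_if_vanishing:
  fixes h :: "real \<times> 'a::euclidean_space \<Rightarrow> 'b::real_normed_vector"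
  assumes smooth: "smooth_on U h" and ball: "cball (0, w0) R \<subseteq> U"
    and vanish: "\<And>w. (0, w) \<in> U \<Longrightarrow> h (0, w) = 0"
  obtains B where "0 \<le> B" "\<And>t w. (t, w) \<in> cball (0, w0) R \<Longrightarrow> norm (h (t, w)) \<le> B * \<bar>t\<bar>"
proof -
  have "continuous_on (cball (0, w0) R) (iter_deriv h [(1, 0)])"
    using smooth_on_imp_continuous_on[OF smooth_on_iter_deriv[OF smooth]] ball
    by (rule continuous_on_subset)
  then have "bounded (iter_deriv h [(1, 0)] ` cball (0, w0) R)"
    by (intro compact_imp_bounded compact_continuous_image compact_cball)
  then obtain B where "0 < B" and B: "\<And>x. x \<in> cball (0, w0) R \<Longrightarrow> norm (iter_deriv h [(1, 0)] x) \<le> B"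
    by (auto simp: bounded_pos)
  have "norm (h (t, w)) \<le> B * \<bar>t\<bar>" if tw: "(t, w) \<in> cball (0, w0) R" for t w
  proof -
    have seg: "(0, w) + u *\<^sub>R (t, 0) \<in> cball (0, w0) R" if "u \<in> {0..1}" for u
    proof -
      have "\<bar>u * t\<bar> \<le> \<bar>t\<bar>"
        using that by (simp add: abs_mult mult_left_le_one_le)
      then show ?thesis
        using tw dist_Pair_shrink_fst[of "u * t" t w0 w] by simp
    qed
    have "norm (h ((0, w) + (t, 0)) - h (0, w)) \<le> B * \<bar>t\<bar>"
    proof (rule norm_diff_le_along_segment)
      show "(h has_derivative frechet_derivative h (at ((0, w) + u *\<^sub>R (t, 0)))) (at ((0, w) + u *\<^sub>R (t, 0)))"
        if "u \<in> {0..1}" for u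
        using smooth_on_has_derivative[OF smooth] seg[OF that] ball by blast
      show "norm (frechet_derivative h (at ((0, w) + u *\<^sub>R (t, 0))) (t, 0)) \<le> B * \<bar>t\<bar>"
        if "u \<in> {0..1}" for u
      proof -
        let ?x = "(0, w) + u *\<^sub>R (t, 0)"
        have "linear (frechet_derivative h (at ?x))"
          using smooth_on_has_derivative[OF smooth] seg[OF that] ball has_derivative_linear by blast
        from linear_cmul[OF this, of t "(1, 0)"]
        have "frechet_derivative h (at ?x) (t, 0) = t *\<^sub>R iter_deriv h [(1, 0)] ?x"
          by simp
        then show ?thesis
          using B[OF seg[OF that]] by (simp add: mult.commute[of B] mult_left_mono)
      qed
    qed
    then show ?thesis
      using vanish ball seg[of 0] by auto
  qed
  with \<open>0 < B\<close> show ?thesis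
    using that by (meson less_imp_le)
qed

section \<open>The composite \<open>g(t, t log |t|, z)\<close>\<close>

definition tlog_map :: "real \<times> 'e \<Rightarrow> real \<times> real \<times> 'e" where
  "tlog_map p = (fst p, fst p * ln \<bar>fst p\<bar>, snd p)"

lemma tlog_comp_eq: "tlog_comp g = g \<circ> tlog_map"
  by (auto simp: tlog_comp_def tlog_map_def)

lemma continuous_on_tlog_map: "continuous_on S (tlog_map :: real \<times> 'e::topological_space \<Rightarrow> _)"
  unfolding tlog_map_def
  by (intro continuous_intros continuous_on_compose2[OF continuous_at_imp_continuous_on, OF ballI,
        OF isCont_mult_ln_abs]) auto

lemma open_tlog_map_vimage: "open S \<Longrightarrow> open (tlog_map -` S)"
  by (intro open_vimage continuous_on_tlog_map)

lemma tlog_map_has_derivative: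
  assumes "fst p \<noteq> 0"
  shows "(tlog_map has_derivative (\<lambda>q. (fst q, (ln \<bar>fst p\<bar> + 1) * fst q, snd q))) (at p)"
proof -
  have "((\<lambda>t. t * ln \<bar>t\<bar>) has_derivative (\<lambda>h. (ln \<bar>fst p\<bar> + 1) * h)) (at (fst p))"
    using has_real_derivative_mult_ln_abs[OF assms] by (simp add: has_field_derivative_def)
  from diff_chain_at[OF has_derivative_fst[OF has_derivative_ident] this]
  have "((\<lambda>q. fst q * ln \<bar>fst q\<bar>) has_derivative (\<lambda>q. (ln \<bar>fst p\<bar> + 1) * fst q)) (at p)"
    by (simp add: o_def)
  then show ?thesis
    unfolding tlog_map_def
    by (intro has_derivative_Pair has_derivative_fst[OF has_derivative_ident]
        has_derivative_snd[OF has_derivative_ident])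
qed

lemma tlog_comp_has_derivative_off_axis:
  assumes "fst p \<noteq> 0" and "(g has_derivative G) (at (tlog_map p))"
  shows "(tlog_comp g has_derivative (\<lambda>q. G (fst q, (ln \<bar>fst p\<bar> + 1) * fst q, snd q))) (at p)"
  using diff_chain_at[OF tlog_map_has_derivative[OF assms(1)] assms(2)]
  by (simp add: tlog_comp_eq o_def)

lemma norm_diff_s_le:
  fixes g :: "real \<times> real \<times> 'e::real_normed_vector \<Rightarrow> 'f::real_normed_vector"
  assumes deriv: "\<And>x. x \<in> cball (0, 0, z0) R \<Longrightarrow> (g has_derivative frechet_derivative g (at x)) (at x)"
    and bound: "\<And>t s z. (t, s, z) \<in> cball (0, 0, z0) R \<Longrightarrow>
      norm (frechet_derivative g (at (t, s, z)) (0, 1, 0)) \<le> B * \<bar>t\<bar>"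
    and tsz: "(t, s, z) \<in> cball (0, 0, z0) R"
  shows "norm (g (t, s, z) - g (t, 0, z)) \<le> B * \<bar>t\<bar> * \<bar>s\<bar>"
proof -
  have seg: "(t, 0, z) + u *\<^sub>R (0, s, 0) \<in> cball (0, 0, z0) R" if "u \<in> {0..1}" for u
  proof -
    have "\<bar>u * s\<bar> \<le> \<bar>s\<bar>"
      using that by (simp add: abs_mult mult_left_le_one_le)
    then have "dist (0, z0) (u * s, z) \<le> dist (0, z0) (s, z)"
      by (rule dist_Pair_shrink_fst)
    then have "dist (0, 0, z0) (t, u * s, z) \<le> dist (0, 0, z0) (t, s, z)"
      unfolding dist_Pair_Pair[of 0 "(0, z0)"]
      by (intro real_sqrt_le_mono add_left_mono power_mono zero_le_dist)
    with tsz show ?thesis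
      by simp
  qed
  have "norm (g ((t, 0, z) + (0, s, 0)) - g (t, 0, z)) \<le> B * \<bar>t\<bar> * \<bar>s\<bar>"
  proof (rule norm_diff_le_along_segment)
    fix u :: real
    assume u: "u \<in> {0..1}"
    let ?x = "(t, 0, z) + u *\<^sub>R (0, s, 0)"
    show "(g has_derivative frechet_derivative g (at ?x)) (at ?x)"
      using deriv[OF seg[OF u]] .
    have "linear (frechet_derivative g (at ?x))"
      using deriv[OF seg[OF u]] by (rule has_derivative_linear)
    from linear_cmul[OF this, of s "(0, 1, 0)"]
    have "frechet_derivative g (at ?x) (0, s, 0) = s *\<^sub>R frechet_derivative g (at ?x) (0, 1, 0)"
      by simp
    then show "norm (frechet_derivative g (at ?x) (0, s, 0)) \<le> B * \<bar>t\<bar> * \<bar>s\<bar>"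
      using bound[of t "u * s" z] seg[OF u] by (simp add: mult.commute[of _ "\<bar>s\<bar>"] mult_left_mono)
  qed
  then show ?thesis
    by simp
qed

lemma tlog_comp_has_derivative_on_axis:
  assumes "(g has_derivative G) (at (0, 0, z))" and "0 \<le> B"
    and increment: "\<forall>\<^sub>F p in nhds (0, z).
      norm (g (tlog_map p) - g (fst p, 0, snd p)) \<le> B * \<bar>fst p\<bar> * \<bar>fst p * ln \<bar>fst p\<bar>\<bar>"
  shows "(tlog_comp g has_derivative (\<lambda>(dt, dz). dt *\<^sub>R G (1, 0, 0) + G (0, 0, dz))) (at (0, z))"
proof -
  have "((\<lambda>p. (fst p, 0::real, snd p)) has_derivative (\<lambda>q. (fst q, 0, snd q))) (at (0, z))"
    by (intro has_derivative_Pair has_derivative_fst[OF has_derivative_ident]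
        has_derivative_snd[OF has_derivative_ident] has_derivative_const)
  from diff_chain_at[OF this] assms(1)
  have "((\<lambda>p. g (fst p, 0, snd p)) has_derivative (\<lambda>q. G (fst q, 0, snd q))) (at (0, z))"
    by (simp add: o_def)
  moreover have "((\<lambda>p. g (tlog_map p) - g (fst p, 0, snd p)) has_derivative (\<lambda>_. 0)) (at (0, z))"
  proof (rule has_derivative_zero_if_norm_le)
    show "\<forall>\<^sub>F p in nhds (0, z).
      norm (g (tlog_map p) - g (fst p, 0, snd p)) \<le> B * \<bar>fst p * ln \<bar>fst p\<bar>\<bar> * norm (p - (0, z))"
      using increment
    proof eventually_elim
      case (elim p)
      have "\<bar>fst p\<bar> \<le> norm (p - (0, z))"
        using norm_fst_le[of "fst p" "snd p - z"] by (cases p) simp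
      have "B * \<bar>fst p\<bar> * \<bar>fst p * ln \<bar>fst p\<bar>\<bar> = (B * \<bar>fst p * ln \<bar>fst p\<bar>\<bar>) * \<bar>fst p\<bar>"
        by (simp only: mult_ac)
      also have "\<dots> \<le> (B * \<bar>fst p * ln \<bar>fst p\<bar>\<bar>) * norm (p - (0, z))"
        using \<open>\<bar>fst p\<bar> \<le> norm (p - (0, z))\<close> \<open>0 \<le> B\<close> by (intro mult_left_mono) simp_all
      finally show ?case
        using elim by linarith
    qed
    have "((\<lambda>p. fst p) \<longlongrightarrow> fst (0::real, z)) (at (0, z))"
      by (intro tendsto_fst tendsto_ident_at)
    from isCont_tendsto_compose[OF isCont_mult_ln_abs this]
    have "((\<lambda>p. fst p * ln \<bar>fst p\<bar>) \<longlongrightarrow> 0) (at (0::real, z))"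
      by simp
    from tendsto_mult_left[OF tendsto_rabs_zero[OF this], of B]
    show "((\<lambda>p. B * \<bar>fst p * ln \<bar>fst p\<bar>\<bar>) \<longlongrightarrow> 0) (at (0, z))"
      by simp
  qed
  ultimately have "(tlog_comp g has_derivative (\<lambda>q. G (fst q, 0, snd q))) (at (0, z))"
    using has_derivative_add by (fastforce simp: tlog_comp_eq o_def)
  moreover have "(\<lambda>q. G (fst q, 0, snd q)) = (\<lambda>(dt, dz). dt *\<^sub>R G (1, 0, 0) + G (0, 0, dz))"
  proof
    fix q
    show "G (fst q, 0, snd q) = (case q of (dt, dz) \<Rightarrow> dt *\<^sub>R G (1, 0, 0) + G (0, 0, dz))"
      using linear_triple_expand[OF has_derivative_linear[OF assms(1)], of "fst q" 0 "snd q"]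
      by (simp add: split_def)
  qed
  ultimately show ?thesis
    by simp
qed

lemma partial_s_eq_0_if_constant:
  fixes g :: "real \<times> real \<times> 'e::real_normed_vector \<Rightarrow> 'f::real_normed_vector"
    and U :: "(real \<times> real \<times> 'e) set"
  assumes "open U" and "(0, s, z) \<in> U" and "(g has_derivative G) (at (0, s, z))"
    and const: "\<And>s s'. (0, s, z) \<in> U \<Longrightarrow> (0, s', z) \<in> U \<Longrightarrow> g (0, s, z) = g (0, s', z)"
  shows "G (0, 1, 0) = 0"
proof (rule has_derivative_eq_0_if_constant_along_line[OF assms(3)])
  have "open ((\<lambda>u. (0, s, z) + u *\<^sub>R (0, 1, 0)) -` U)"
    by (intro open_vimage assms(1) continuous_intros)
  then have "\<forall>\<^sub>F u in nhds 0. u \<in> (\<lambda>u. (0, s, z) + u *\<^sub>R (0, 1, 0)) -` U"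
    by (rule eventually_nhds_in_open) (simp add: assms(2))
  then show "\<forall>\<^sub>F u in nhds 0. g ((0, s, z) + u *\<^sub>R (0, 1, 0)) = g (0, s, z)"
  proof eventually_elim
    case (elim u)
    then show ?case
      using const[of "s + u" s] assms(2) by simp
  qed
qed

text \<open>The chain rule formula for the derivative of \<^const>\<open>tlog_comp\<close> g at p. On the axis
  it reads dg(0,0,z)(dt,dt,dz), because ln 0 = 0; this is still the derivative there since
  \<open>\<partial>g/\<partial>s\<close> vanishes on t = 0.\<close>
definition tlog_comp_deriv :: "(real \<times> real \<times> 'e::real_normed_vector \<Rightarrow> 'f::real_normed_vector) \<Rightarrow> real \<times> 'e \<Rightarrow> real \<times> 'e \<Rightarrow> 'f" where
  "tlog_comp_deriv g p q =
     frechet_derivative g (at (tlog_map p)) (fst q, (ln \<bar>fst p\<bar> + 1) * fst q, snd q)"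

lemma tlog_comp_deriv_eq:
  assumes "linear (frechet_derivative g (at (tlog_map p)))"
  shows "tlog_comp_deriv g p q = frechet_derivative g (at (tlog_map p)) (fst q, 0, snd q)
    + (ln \<bar>fst p\<bar> + 1) *\<^sub>R (fst q *\<^sub>R frechet_derivative g (at (tlog_map p)) (0, 1, 0))"
  using linear_triple_expand[OF assms, of "fst q" "(ln \<bar>fst p\<bar> + 1) * fst q" "snd q"]
    linear_triple_expand[OF assms, of "fst q" 0 "snd q"]
  by (simp add: tlog_comp_deriv_def)

lemma tlog_comp_deriv_on_axis:
  fixes g :: "real \<times> real \<times> 'e::real_normed_vector \<Rightarrow> 'f::real_normed_vector"
  assumes lin: "linear (frechet_derivative g (at (0, 0, z)))"
    and "frechet_derivative g (at (0, 0, z)) (0, 1, 0) = 0"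
  shows "tlog_comp_deriv g (0, z) = (\<lambda>(dt, dz). dt *\<^sub>R frechet_derivative g (at (0, 0, z)) (1, 0, 0)
    + frechet_derivative g (at (0, 0, z)) (0, 0, dz))"
proof
  fix q :: "real \<times> 'e"
  show "tlog_comp_deriv g (0, z) q = (case q of (dt, dz) \<Rightarrow>
      dt *\<^sub>R frechet_derivative g (at (0, 0, z)) (1, 0, 0) + frechet_derivative g (at (0, 0, z)) (0, 0, dz))"
    using linear_triple_expand[OF lin, of "fst q" "fst q" "snd q"] assms(2)
    by (simp add: tlog_comp_deriv_def tlog_map_def split_def)
qed

lemma tlog_comp_has_derivative:
  fixes g :: "real \<times> real \<times> 'e::euclidean_space \<Rightarrow> 'f::real_normed_vector"
  assumes smooth: "smooth_on U g" and ball: "cball (0, 0, z0) R \<subseteq> U"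
    and ds0: "\<And>s z. (0, s, z) \<in> U \<Longrightarrow> frechet_derivative g (at (0, s, z)) (0, 1, 0) = 0"
    and p: "tlog_map p \<in> ball (0, 0, z0) R"
  shows "(tlog_comp g has_derivative tlog_comp_deriv g p) (at p)"
proof (cases "fst p = 0")
  case False
  have "tlog_map p \<in> U"
    using p ball by auto
  from tlog_comp_has_derivative_off_axis[OF False smooth_on_has_derivative[OF smooth this]]
  show ?thesis
    by (simp add: tlog_comp_deriv_def[abs_def])
next
  case True
  then obtain z where p_eq: "p = (0, z)"
    by (cases p) auto
  have deriv: "(g has_derivative frechet_derivative g (at x)) (at x)" if "x \<in> cball (0, 0, z0) R" for x
    using smooth_on_has_derivative[OF smooth] ball that by blast
  have z: "tlog_map p = (0, 0, z)" "(0, 0, z) \<in> U"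
    using p ball by (auto simp: p_eq tlog_map_def)
  obtain B where "0 \<le> B"
    and B: "\<And>t w. (t, w) \<in> cball (0, 0, z0) R \<Longrightarrow> norm (iter_deriv g [(0, 1, 0)] (t, w)) \<le> B * \<bar>t\<bar>"
    by (rule norm_le_mult_abs_fst_if_vanishing[OF smooth_on_iter_deriv[OF smooth, of "[(0, 1, 0)]"] ball])
      (use ds0 in auto)
  have "open (tlog_map -` ball (0, 0, z0) R)"
    by (intro open_tlog_map_vimage open_ball)
  then have "\<forall>\<^sub>F q in nhds p. q \<in> tlog_map -` ball (0, 0, z0) R"
    by (rule eventually_nhds_in_open) (use p in simp)
  then have increment: "\<forall>\<^sub>F q in nhds (0, z).
      norm (g (tlog_map q) - g (fst q, 0, snd q)) \<le> B * \<bar>fst q\<bar> * \<bar>fst q * ln \<bar>fst q\<bar>\<bar>"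
    unfolding p_eq
  proof eventually_elim
    case (elim q)
    then have "(fst q, fst q * ln \<bar>fst q\<bar>, snd q) \<in> cball (0, 0, z0) R"
      by (simp add: tlog_map_def)
    from norm_diff_s_le[OF deriv _ this, of B] B
    show ?case
      by (simp add: tlog_map_def)
  qed
  have G: "(g has_derivative frechet_derivative g (at (0, 0, z))) (at (0, 0, z))"
    using smooth_on_has_derivative[OF smooth z(2)] .
  from tlog_comp_has_derivative_on_axis[OF G \<open>0 \<le> B\<close> increment]
    tlog_comp_deriv_on_axis[OF has_derivative_linear[OF G] ds0[OF z(2)]]
  show ?thesis
    by (simp add: p_eq)
qed

lemma continuous_on_tlog_comp_deriv:
  fixes g :: "real \<times> real \<times> 'e::euclidean_space \<Rightarrow> 'f::real_normed_vector"
  assumes smooth: "smooth_on U g" and ball: "cball (0, 0, z0) R \<subseteq> U"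
    and ds0: "\<And>s z. (0, s, z) \<in> U \<Longrightarrow> frechet_derivative g (at (0, s, z)) (0, 1, 0) = 0"
  shows "continuous_on (tlog_map -` ball (0, 0, z0) R) (\<lambda>p. tlog_comp_deriv g p q)"
proof -
  let ?V = "tlog_map -` ball (0, 0, z0) R"
  let ?dg = "\<lambda>v p. iter_deriv g [v] (tlog_map p)"
  have V: "open ?V"
    by (intro open_tlog_map_vimage open_ball)
  have V_U: "tlog_map p \<in> U" if "p \<in> ?V" for p
    using that ball by auto
  obtain B where B: "\<And>t w. (t, w) \<in> cball (0, 0, z0) R \<Longrightarrow> norm (iter_deriv g [(0, 1, 0)] (t, w)) \<le> B * \<bar>t\<bar>"
    by (rule norm_le_mult_abs_fst_if_vanishing[OF smooth_on_iter_deriv[OF smooth, of "[(0, 1, 0)]"] ball])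
      (use ds0 in auto)
  have dg: "isCont (?dg v) p" if "p \<in> ?V" for v p
  proof -
    have "continuous_on ?V (?dg v)"
      using continuous_on_compose2[OF smooth_on_imp_continuous_on[OF smooth_on_iter_deriv[OF smooth]]
          continuous_on_tlog_map] V_U by blast
    with V that show ?thesis
      by (simp add: continuous_on_eq_continuous_at)
  qed
  have "isCont (\<lambda>p. tlog_comp_deriv g p q) p" if p: "p \<in> ?V" for p
  proof -
    have "\<forall>\<^sub>F y in nhds p. norm (fst q *\<^sub>R ?dg (0, 1, 0) y) \<le> (\<bar>fst q\<bar> * B) * \<bar>fst y\<bar>"
      using eventually_nhds_in_open[OF V p]
    proof eventually_elim
      case (elim y)
      then have "norm (?dg (0, 1, 0) y) \<le> B * \<bar>fst y\<bar>"
        using B[of "fst y" "(fst y * ln \<bar>fst y\<bar>, snd y)"] by (simp add: tlog_map_def)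
      then show ?case
        by (simp add: mult_left_mono mult.assoc)
    qed
    with dg[OF p] have "isCont (\<lambda>y. (ln \<bar>fst y\<bar> + 1) *\<^sub>R (fst q *\<^sub>R ?dg (0, 1, 0) y)) p"
      by (intro isCont_ln_abs_scaleR continuous_intros)
    with dg[OF p] have cont: "isCont (\<lambda>y. ?dg (fst q, 0, snd q) y + (ln \<bar>fst y\<bar> + 1) *\<^sub>R (fst q *\<^sub>R ?dg (0, 1, 0) y)) p"
      by (intro continuous_add)
    have eq: "\<forall>\<^sub>F y in nhds p. tlog_comp_deriv g y q
        = ?dg (fst q, 0, snd q) y + (ln \<bar>fst y\<bar> + 1) *\<^sub>R (fst q *\<^sub>R ?dg (0, 1, 0) y)"
      using eventually_nhds_in_open[OF V p]
    proof eventually_elim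
      case (elim y)
      have "linear (frechet_derivative g (at (tlog_map y)))"
        using smooth_on_has_derivative[OF smooth V_U[OF elim]] by (rule has_derivative_linear)
      then show ?case
        by (simp add: tlog_comp_deriv_eq)
    qed
    show ?thesis
      using isCont_cong[OF eq] cont by simp
  qed
  with V show ?thesis
    by (simp add: continuous_on_eq_continuous_at)
qed

theorem proposition24:
  fixes g :: "real \<times> real \<times> 'e::euclidean_space \<Rightarrow> 'f::real_normed_vector"
    and U :: "(real \<times> real \<times> 'e) set" and z0 :: 'e
  assumes "open U" and "(0, 0, z0) \<in> U"
    and "smooth_on U g"
    and "\<And>s s' z. (0, s, z) \<in> U \<Longrightarrow> (0, s', z) \<in> U \<Longrightarrow> g (0, s, z) = g (0, s', z)"
  shows "\<exists>V. open V \<and> (0, z0) \<in> V \<and>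
           (\<forall>t z. (t, z) \<in> V \<longrightarrow> (t, t * ln \<bar>t\<bar>, z) \<in> U) \<and>
           C1_on V (tlog_comp g) \<and>
           (\<forall>z. (0, z) \<in> V \<longrightarrow>
              (tlog_comp g has_derivative
                 (\<lambda>(dt, dz). dt *\<^sub>R frechet_derivative g (at (0, 0, z)) (1, 0, 0)
                            + frechet_derivative g (at (0, 0, z)) (0, 0, dz)))
                (at (0, z)))"
proof -
  obtain R where "0 < R" and ball: "cball (0, 0, z0) R \<subseteq> U"
    using assms(1,2) open_contains_cball by blast
  have ds0: "frechet_derivative g (at (0, s, z)) (0, 1, 0) = 0" if "(0, s, z) \<in> U" for s z
    using partial_s_eq_0_if_constant[OF assms(1) that smooth_on_has_derivative[OF assms(3) that]] assms(4)
    by blast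
  define V where "V = tlog_map -` ball (0, 0, z0) R"
  have deriv: "(tlog_comp g has_derivative tlog_comp_deriv g p) (at p)" if "p \<in> V" for p
    using tlog_comp_has_derivative[OF assms(3) ball ds0] that by (simp add: V_def)
  show ?thesis
  proof (intro exI[of _ V] conjI allI impI)
    show "open V"
      unfolding V_def by (intro open_tlog_map_vimage open_ball)
    show "(0, z0) \<in> V"
      using \<open>0 < R\<close> by (simp add: V_def tlog_map_def)
    show "(t, t * ln \<bar>t\<bar>, z) \<in> U" if "(t, z) \<in> V" for t z
      using that ball by (auto simp: V_def tlog_map_def)
    show "C1_on V (tlog_comp g)"
      using C1_onI[OF deriv continuous_on_tlog_comp_deriv[OF assms(3) ball ds0]] by (simp add: V_def)
    fix z
    assume "(0, z) \<in> V"
    then have z: "(0, 0, z) \<in> U"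
      using ball by (auto simp: V_def tlog_map_def)
    have lin: "linear (frechet_derivative g (at (0, 0, z)))"
      using smooth_on_has_derivative[OF assms(3) z] by (rule has_derivative_linear)
    from deriv[OF \<open>(0, z) \<in> V\<close>]
    show "(tlog_comp g has_derivative
        (\<lambda>(dt, dz). dt *\<^sub>R frechet_derivative g (at (0, 0, z)) (1, 0, 0)
                   + frechet_derivative g (at (0, 0, z)) (0, 0, dz))) (at (0, z))"
      by (simp only: tlog_comp_deriv_on_axis[OF lin ds0[OF z]])
  qed
qed

end
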